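(* Let $0<R_{\rm id}<R_{\rm d}$, and let $\Omega$, $\Gamma_{\rm d}$, $\Gamma_{\rm id}$, $n$, $(\overline u,\overline q)$, $\omega^*$, $v(\omega)$, $\widehat v(\omega)$, $J'(\omega)$, the iteration $\omega_{k+1}=\omega_k-\rho_kJ'(\omega_k)$, $\mu_k=\omega^*-\omega_k$ and $C_j$ be as in the context. If for some $k$ the error has the finite Fourier expansion $\mu_k=\sum_{M\le|j|\le N}a_j^{(k)}e^{ij\theta}$ (integers $N\ge M\ge0$), then $$J'(\omega_k)=-\sum_{M\le|j|\le N}C_ja_j^{(k)}e^{ij\theta}\quad\text{on }\Gamma_{\rm id},$$ and consequently $\mu_{k+1}=\sum_{M\le|j|\le N}a_j^{(k+1)}e^{ij\theta}$ with $$a_j^{(k+1)}=(1-C_j\rho_k)\,a_j^{(k)}\qquad (M\le|j|\le N).$$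
   Context: Setting: $0<R_{\rm id}<R_{\rm d}$; $\Omega=\{(x,y): R_{\rm id}^2<x^2+y^2<R_{\rm d}^2\}$ is an annulus with outer boundary $\Gamma_{\rm d}=\{x^2+y^2=R_{\rm d}^2\}$ and inner boundary $\Gamma_{\rm id}=\{x^2+y^2=R_{\rm id}^2\}$; $(r,\theta)$ are polar coordinates; $n$ is the unit outward normal to $\partial\Omega$ (so $\partial/\partial n=\partial/\partial r$ on $\Gamma_{\rm d}$ and $\partial/\partial n=-\partial/\partial r$ on $\Gamma_{\rm id}$). Given Cauchy data $(\overline u,\overline q)$ on $\Gamma_{\rm d}$. For a boundary value $\omega$ on $\Gamma_{\rm id}$, $v(\omega)$ denotes the solution of the primary problem $-\Delta v=0$ in $\Omega$, $\partial v/\partial n=\overline q$ on $\Gamma_{\rm d}$, $v=\omega$ on $\Gamma_{\rm id}$; $\widehat v(\omega)$ denotes the solution of the adjoint problem $-\Delta \widehat v=0$ in $\Omega$, $\partial\widehat v/\partial n=2(v(\omega)-\overline u)$ on $\Gamma_{\rm d}$, $\widehat v=0$ on $\Gamma_{\rm id}$; and $J'(\omega):=-\partial\widehat v(\omega)/\partial n|_{\Gamma_{\rm id}}$. The exact boundary value $\omega^*$ is assumed to exist, i.e. $v(\omega^* )|_{\Gamma_{\rm d}}=\overline u$. Starting from $\omega_0$ and step sizes $\rho_k>0$, the iteration is $\omega_{k+1}=\omega_k-\rho_kJ'(\omega_k)$ (with exact solution of the boundary value problems), and $\mu_k:=\omega^*-\omega_k$. For integers $j$, $$C_j:=\frac{8R_{\rm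 d}^{2|j|+1}R_{\rm id}^{2|j|-1}}{(R_{\rm id}^{2|j|}+R_{\rm d}^{2|j|})^2}.$$ Functions on $\Gamma_{\rm id}$ may be complex-valued; Fourier expansions are in $e^{ij\theta}$. *)

theory Defs
  imports "HOL-Analysis.Analysis"
begin

(* The plane R^2 is identified with the complex numbers; functions may be complex-valued. *)

definition annulus :: "real \<Rightarrow> real \<Rightarrow> complex set" where
  "annulus Rid Rd = {z. Rid < cmod z \<and> cmod z < Rd}"

definition cl_annulus :: "real \<Rightarrow> real \<Rightarrow> complex set" where
  "cl_annulus Rid Rd = {z. Rid \<le> cmod z \<and> cmod z \<le> Rd}"

definition dx :: "(complex \<Rightarrow> complex) \<Rightarrow> complex \<Rightarrow> complex" where
  "dx v z = vector_derivative (\<lambda>t::real. v (z + of_real t)) (at 0)"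

definition dy :: "(complex \<Rightarrow> complex) \<Rightarrow> complex \<Rightarrow> complex" where
  "dy v z = vector_derivative (\<lambda>t::real. v (z + \<i> * of_real t)) (at 0)"

definition harmonic_C2_on :: "complex set \<Rightarrow> (complex \<Rightarrow> complex) \<Rightarrow> bool" where
  "harmonic_C2_on S v \<longleftrightarrow>
     (\<forall>z\<in>S. v differentiable (at z) \<and> dx v differentiable (at z) \<and> dy v differentiable (at z)
            \<and> - (dx (dx v) z + dy (dy v) z) = 0)
     \<and> continuous_on S (dx (dx v)) \<and> continuous_on S (dx (dy v))
     \<and> continuous_on S (dy (dx v)) \<and> continuous_on S (dy (dy v))"

definition C1_deriv_on :: "complex set \<Rightarrow> (complex \<Rightarrow> complex) \<Rightarrow> (complex \<Rightarrow> complex \<Rightarrow> complex) \<Rightarrow> bool" where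
  "C1_deriv_on S v v' \<longleftrightarrow>
     (\<forall>z\<in>S. (v has_derivative v' z) (at z within S)) \<and> (\<forall>h. continuous_on S (\<lambda>z. v' z h))"

(* normal derivatives (unit outward normal n) at the boundary point with polar angle theta:
   on Gamma_d, d/dn = d/dr; on Gamma_id, d/dn = - d/dr *)
definition normal_deriv_d :: "real \<Rightarrow> (complex \<Rightarrow> complex \<Rightarrow> complex) \<Rightarrow> real \<Rightarrow> complex" where
  "normal_deriv_d Rd v' \<theta> = v' (of_real Rd * cis \<theta>) (cis \<theta>)"

definition normal_deriv_id :: "real \<Rightarrow> (complex \<Rightarrow> complex \<Rightarrow> complex) \<Rightarrow> real \<Rightarrow> complex" where
  "normal_deriv_id Rid v' \<theta> = - v' (of_real Rid * cis \<theta>) (cis \<theta>)"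

definition mixed_bvp_solution ::
  "real \<Rightarrow> real \<Rightarrow> (real \<Rightarrow> complex) \<Rightarrow> (real \<Rightarrow> complex) \<Rightarrow> (complex \<Rightarrow> complex) \<Rightarrow> (complex \<Rightarrow> complex \<Rightarrow> complex) \<Rightarrow> bool" where
  "mixed_bvp_solution Rid Rd g w v v' \<longleftrightarrow>
     harmonic_C2_on (annulus Rid Rd) v \<and> C1_deriv_on (cl_annulus Rid Rd) v v'
     \<and> (\<forall>\<theta>. normal_deriv_d Rd v' \<theta> = g \<theta>)
     \<and> (\<forall>\<theta>. v (of_real Rid * cis \<theta>) = w \<theta>)"

definition Jprime :: "real \<Rightarrow> (complex \<Rightarrow> complex \<Rightarrow> complex) \<Rightarrow> real \<Rightarrow> complex" where
  "Jprime Rid vh' \<theta> = - normal_deriv_id Rid vh' \<theta>"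

definition Cj :: "real \<Rightarrow> real \<Rightarrow> int \<Rightarrow> real" where
  "Cj Rid Rd j = 8 * Rd powi (2 * \<bar>j\<bar> + 1) * Rid powi (2 * \<bar>j\<bar> - 1)
                 / (Rid powi (2 * \<bar>j\<bar>) + Rd powi (2 * \<bar>j\<bar>))^2"

definition freqs :: "nat \<Rightarrow> nat \<Rightarrow> int set" where
  "freqs M N = {j. int M \<le> \<bar>j\<bar> \<and> \<bar>j\<bar> \<le> int N}"

end

theory Submission
  imports Defs "HOL-Complex_Analysis.Cauchy_Integral_Formula"
begin

(*
  In the annulus Omega every solution of the primary or adjoint problem with
  finite Fourier data is an explicit finite sum of separated harmonic functions
  (r^j, r^-j) e^{ij theta} and ln r, once we know that the mixed problem (Neumann data on
  Gamma_d, Dirichlet data on Gamma_id) has at most one classical solution.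

  1. Calculus in the plane: partial derivatives, chain rule in polar coordinates, and a
     predicate naming a harmonic function together with its partial derivatives.
  2. Uniqueness (energy method, locale harmonic_annulus): the total radial flux
     F(r) = int r Re(conj w * w_r) dtheta satisfies F' = int (r |w_r|^2 + |w_theta|^2 / r) >= 0;
     for homogeneous mixed data F vanishes at both radii, so w_r = 0 and w = 0.
  3. Modes X z^j + Y conj(z^-j) + Z ln|z| are harmonic (Wirtinger calculus); we compute
     their values and radial derivatives on circles.
  4. For the error mu_k = sum a_j e^{ij theta}, the difference v(omega_star) - v(omega_k) is the
     mode sum with coefficients phi_j (Dirichlet data e^{ij theta}, zero Neumann data), whose
     trace on Gamma_d is beta_j e^{ij theta}; the adjoint state is the mode sum with
     coefficients psi_j, whose radial derivative on Gamma_id is -C_j e^{ij theta}.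
*)

abbreviation polar :: "real \<Rightarrow> real \<Rightarrow> complex" where
  "polar r t \<equiv> of_real r * cis t"

lemma real_linear_decomp:
  assumes "bounded_linear (D :: complex \<Rightarrow> complex)"
  shows "D h = of_real (Re h) * D 1 + of_real (Im h) * D \<i>"
proof -
  interpret bounded_linear D by fact
  have "h = Re h *\<^sub>R 1 + Im h *\<^sub>R \<i>" by (simp add: complex_eq_iff)
  then have "D h = D (Re h *\<^sub>R 1 + Im h *\<^sub>R \<i>)" by simp
  also have "\<dots> = Re h *\<^sub>R D 1 + Im h *\<^sub>R D \<i>" by (simp add: add scaleR)
  finally show ?thesis by (simp add: scaleR_conv_of_real)
qed

lemma has_derivative_partials:
  assumes "(f has_derivative D) (at z)"
  shows "dx f z = D 1" and "dy f z = D \<i>"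
proof -
  have lin: "D (of_real t * c) = of_real t * D c" for t c
    using has_derivative_bounded_linear[OF assms]
    by (simp add: bounded_linear.linear linear_scale flip: scaleR_conv_of_real)
  have "((\<lambda>t::real. z + of_real t * c) has_derivative (\<lambda>t. of_real t * c)) (at 0)" for c
    by (auto intro!: derivative_eq_intros)
  moreover have "(f has_derivative D) (at (z + of_real 0 * c))" for c
    using assms by simp
  ultimately have "((\<lambda>t::real. f (z + of_real t * c)) has_derivative (\<lambda>t. D (of_real t * c))) (at 0)" for c
    by (rule has_derivative_compose)
  then have "((\<lambda>t::real. f (z + of_real t * c)) has_vector_derivative D c) (at 0)" for c
    unfolding has_vector_derivative_def by (rule has_derivative_eq_rhs) (simp add: lin scaleR_conv_of_real)
  from this[of 1] this[of \<i>] show "dx f z = D 1" "dy f z = D \<i>"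
    unfolding dx_def dy_def by (simp_all add: vector_derivative_at mult.commute)
qed

lemma has_derivative_via_partials:
  assumes "f differentiable (at z)"
  shows "(f has_derivative (\<lambda>h. of_real (Re h) * dx f z + of_real (Im h) * dy f z)) (at z)"
proof -
  obtain D where D: "(f has_derivative D) (at z)" using assms by (auto simp: differentiable_def)
  have "(f has_derivative (\<lambda>h. of_real (Re h) * D 1 + of_real (Im h) * D \<i>)) (at z)"
    using D by (rule has_derivative_eq_rhs) (rule ext, rule real_linear_decomp[OF has_derivative_bounded_linear[OF D]])
  then show ?thesis unfolding has_derivative_partials[OF D] .
qed

lemma radial_vector_derivative:
  assumes "(g has_derivative (\<lambda>h. of_real (Re h) * gx + of_real (Im h) * gy)) (at (polar r t))"
  shows "((\<lambda>r. g (polar r t)) has_vector_derivative of_real (cos t) * gx + of_real (sin t) * gy) (at r)"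
proof -
  have "((\<lambda>r::real. polar r t) has_derivative (\<lambda>h. of_real h * cis t)) (at r)"
    by (auto intro!: derivative_eq_intros)
  from has_derivative_compose[OF this assms] show ?thesis
    unfolding has_vector_derivative_def
    by (rule has_derivative_eq_rhs) (auto simp: scaleR_conv_of_real algebra_simps)
qed

lemma angular_vector_derivative:
  assumes "(g has_derivative (\<lambda>h. of_real (Re h) * gx + of_real (Im h) * gy)) (at (polar r t))"
  shows "((\<lambda>t. g (polar r t)) has_vector_derivative
            of_real r * (- of_real (sin t) * gx + of_real (cos t) * gy)) (at t)"
proof -
  have "((\<lambda>t::real. polar r t) has_derivative (\<lambda>h. of_real r * (h *\<^sub>R (\<i> * cis t)))) (at t)"
    by (auto intro!: derivative_eq_intros)
  from has_derivative_compose[OF this assms] show ?thesis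
    unfolding has_vector_derivative_def
    by (rule has_derivative_eq_rhs) (auto simp: scaleR_conv_of_real algebra_simps)
qed

text \<open>Naming the partials (instead of using \<open>dx\<close>, \<open>dy\<close>) makes the notion
  closed under linear combinations without further differentiability bookkeeping.\<close>
definition harmonic_partials ::
  "complex set \<Rightarrow> (complex \<Rightarrow> complex) \<Rightarrow> (complex \<Rightarrow> complex) \<Rightarrow> (complex \<Rightarrow> complex) \<Rightarrow>
   (complex \<Rightarrow> complex) \<Rightarrow> (complex \<Rightarrow> complex) \<Rightarrow> (complex \<Rightarrow> complex) \<Rightarrow> (complex \<Rightarrow> complex) \<Rightarrow> bool"
where
  "harmonic_partials S u ux uy uxx uxy uyx uyy \<longleftrightarrow>
    (\<forall>z\<in>S. (u has_derivative (\<lambda>h. of_real (Re h) * ux z + of_real (Im h) * uy z)) (at z)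
         \<and> (ux has_derivative (\<lambda>h. of_real (Re h) * uxx z + of_real (Im h) * uxy z)) (at z)
         \<and> (uy has_derivative (\<lambda>h. of_real (Re h) * uyx z + of_real (Im h) * uyy z)) (at z)
         \<and> uxx z + uyy z = 0)
    \<and> continuous_on S uxx \<and> continuous_on S uxy \<and> continuous_on S uyx \<and> continuous_on S uyy"

lemma harmonic_partials_subset:
  "harmonic_partials S u ux uy uxx uxy uyx uyy \<Longrightarrow> T \<subseteq> S \<Longrightarrow> harmonic_partials T u ux uy uxx uxy uyx uyy"
  unfolding harmonic_partials_def by (auto intro: continuous_on_subset)

lemma harmonic_partials_diff:
  assumes "harmonic_partials S u ux uy uxx uxy uyx uyy" "harmonic_partials S v vx vy vxx vxy vyx vyy"
  shows "harmonic_partials S (\<lambda>z. u z - v z) (\<lambda>z. ux z - vx z) (\<lambda>z. uy z - vy z)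
     (\<lambda>z. uxx z - vxx z) (\<lambda>z. uxy z - vxy z) (\<lambda>z. uyx z - vyx z) (\<lambda>z. uyy z - vyy z)"
  unfolding harmonic_partials_def
proof (intro conjI ballI continuous_on_diff)
  fix z assume z: "z \<in> S"
  note u = assms(1)[unfolded harmonic_partials_def, THEN conjunct1, rule_format, OF z]
  note v = assms(2)[unfolded harmonic_partials_def, THEN conjunct1, rule_format, OF z]
  show "((\<lambda>z. u z - v z) has_derivative (\<lambda>h. of_real (Re h) * (ux z - vx z) + of_real (Im h) * (uy z - vy z))) (at z)"
    using has_derivative_diff[OF conjunct1[OF u] conjunct1[OF v]]
    by (rule has_derivative_eq_rhs) (auto simp: algebra_simps)
  show "((\<lambda>z. ux z - vx z) has_derivative (\<lambda>h. of_real (Re h) * (uxx z - vxx z) + of_real (Im h) * (uxy z - vxy z))) (at z)"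
    using has_derivative_diff[OF conjunct1[OF conjunct2[OF u]] conjunct1[OF conjunct2[OF v]]]
    by (rule has_derivative_eq_rhs) (auto simp: algebra_simps)
  show "((\<lambda>z. uy z - vy z) has_derivative (\<lambda>h. of_real (Re h) * (uyx z - vyx z) + of_real (Im h) * (uyy z - vyy z))) (at z)"
    using has_derivative_diff[OF conjunct1[OF conjunct2[OF conjunct2[OF u]]] conjunct1[OF conjunct2[OF conjunct2[OF v]]]]
    by (rule has_derivative_eq_rhs) (auto simp: algebra_simps)
  show "uxx z - vxx z + (uyy z - vyy z) = 0"
    using u v by (metis add_diff_add diff_zero)
qed (use assms in \<open>auto simp: harmonic_partials_def\<close>)

lemma harmonic_C2_imp_partials:
  assumes "harmonic_C2_on S v"
  shows "harmonic_partials S v (dx v) (dy v) (dx (dx v)) (dy (dx v)) (dx (dy v)) (dy (dy v))"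
proof -
  have "x + y = 0" if "- (x + y) = 0" for x y :: complex
    using that by (metis neg_equal_0_iff_equal)
  then show ?thesis using assms unfolding harmonic_C2_on_def harmonic_partials_def
    by (auto intro: has_derivative_via_partials simp del: minus_add_distrib)
qed

text \<open>Wirtinger form: if \<open>u\<close> has differential \<open>h \<mapsto> p z h + cnj (q z h)\<close> with holomorphic
  \<open>p\<close>, \<open>q\<close>, then \<open>u\<close> is harmonic (its Laplacian is \<open>4 \<partial>\<bar>\<partial> u = 0\<close>).\<close>
lemma harmonic_partials_Wirtinger:
  assumes du: "\<And>z. z \<in> S \<Longrightarrow> (u has_derivative (\<lambda>h. p z * h + cnj (q z * h))) (at z)"
    and dp: "\<And>z. z \<in> S \<Longrightarrow> (p has_field_derivative p' z) (at z)"
    and dq: "\<And>z. z \<in> S \<Longrightarrow> (q has_field_derivative q' z) (at z)"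
    and "continuous_on S p'" "continuous_on S q'"
  shows "harmonic_partials S u (\<lambda>z. p z + cnj (q z)) (\<lambda>z. \<i> * p z - \<i> * cnj (q z))
     (\<lambda>z. p' z + cnj (q' z)) (\<lambda>z. \<i> * p' z - \<i> * cnj (q' z))
     (\<lambda>z. \<i> * p' z - \<i> * cnj (q' z)) (\<lambda>z. - p' z - cnj (q' z))"
  unfolding harmonic_partials_def
proof (intro conjI ballI)
  fix z assume z: "z \<in> S"
  show "(u has_derivative (\<lambda>h. of_real (Re h) * (p z + cnj (q z)) + of_real (Im h) * (\<i> * p z - \<i> * cnj (q z)))) (at z)"
    using du[OF z] by (rule has_derivative_eq_rhs) (auto simp: complex_eq_iff algebra_simps)
  have dp': "(p has_derivative (\<lambda>h. p' z * h)) (at z)" using dp[OF z] by (simp add: has_field_derivative_def)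
  have dq': "(q has_derivative (\<lambda>h. q' z * h)) (at z)" using dq[OF z] by (simp add: has_field_derivative_def)
  show "((\<lambda>z. p z + cnj (q z)) has_derivative (\<lambda>h. of_real (Re h) * (p' z + cnj (q' z)) + of_real (Im h) * (\<i> * p' z - \<i> * cnj (q' z)))) (at z)"
    using has_derivative_add[OF dp' has_derivative_cnj[OF dq']]
    by (rule has_derivative_eq_rhs) (auto simp: complex_eq_iff algebra_simps)
  show "((\<lambda>z. \<i> * p z - \<i> * cnj (q z)) has_derivative (\<lambda>h. of_real (Re h) * (\<i> * p' z - \<i> * cnj (q' z)) + of_real (Im h) * (- p' z - cnj (q' z)))) (at z)"
    using has_derivative_diff[OF has_derivative_mult_right[OF dp', of \<i>] has_derivative_mult_right[OF has_derivative_cnj[OF dq'], of \<i>]]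
    by (rule has_derivative_eq_rhs) (auto simp: complex_eq_iff algebra_simps)
  show "p' z + cnj (q' z) + (- p' z - cnj (q' z)) = 0" by simp
qed (intro continuous_intros assms)+

definition harmonic_on :: "complex set \<Rightarrow> (complex \<Rightarrow> complex) \<Rightarrow> bool" where
  "harmonic_on S u \<longleftrightarrow> (\<exists>ux uy uxx uxy uyx uyy. harmonic_partials S u ux uy uxx uxy uyx uyy)"

lemma harmonic_on_subset: "harmonic_on S u \<Longrightarrow> T \<subseteq> S \<Longrightarrow> harmonic_on T u"
  unfolding harmonic_on_def using harmonic_partials_subset by blast

lemma harmonic_on_diff: "harmonic_on S u \<Longrightarrow> harmonic_on S v \<Longrightarrow> harmonic_on S (\<lambda>z. u z - v z)"
  unfolding harmonic_on_def using harmonic_partials_diff by meson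

lemma harmonic_C2_imp_harmonic_on: "harmonic_C2_on S v \<Longrightarrow> harmonic_on S v"
  unfolding harmonic_on_def using harmonic_C2_imp_partials by blast

text \<open>Wirtinger form with holomorphic \<open>p\<close>, \<open>q\<close>: the second partials are supplied by the
  complex derivatives, which are again holomorphic and hence continuous.\<close>
lemma harmonic_on_Wirtinger:
  assumes S: "open S" and p: "p holomorphic_on S" and q: "q holomorphic_on S"
    and du: "\<And>z. z \<in> S \<Longrightarrow> (u has_derivative (\<lambda>h. p z * h + cnj (q z * h))) (at z)"
  shows "harmonic_on S u"
proof -
  have "harmonic_partials S u (\<lambda>z. p z + cnj (q z)) (\<lambda>z. \<i> * p z - \<i> * cnj (q z))
     (\<lambda>z. deriv p z + cnj (deriv q z)) (\<lambda>z. \<i> * deriv p z - \<i> * cnj (deriv q z))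
     (\<lambda>z. \<i> * deriv p z - \<i> * cnj (deriv q z)) (\<lambda>z. - deriv p z - cnj (deriv q z))"
  proof (rule harmonic_partials_Wirtinger[OF du])
    show "(p has_field_derivative deriv p z) (at z)" "(q has_field_derivative deriv q z) (at z)"
      if "z \<in> S" for z
      using holomorphic_derivI[OF p S that] holomorphic_derivI[OF q S that] by auto
    show "continuous_on S (deriv p)" "continuous_on S (deriv q)"
      using holomorphic_on_imp_continuous_on holomorphic_deriv S p q by blast+
  qed
  then show ?thesis unfolding harmonic_on_def by blast
qed

text \<open>A nondecreasing function (nonnegative derivative \<open>G\<close>) vanishing at both ends of
  \<open>[a, b]\<close> is constant, hence its derivative vanishes in the interior.\<close>
lemma nonneg_derivative_vanishing_ends:
  fixes F G :: "real \<Rightarrow> real"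
  assumes "continuous_on {a..b} F" "F a = 0" "F b = 0"
    and deriv: "\<And>x. a < x \<Longrightarrow> x < b \<Longrightarrow> (F has_field_derivative G x) (at x)"
    and nonneg: "\<And>x. a < x \<Longrightarrow> x < b \<Longrightarrow> 0 \<le> G x"
    and x: "a < x" "x < b"
  shows "G x = 0"
proof -
  have mono: "F r \<le> F s" if "a \<le> r" "r \<le> s" "s \<le> b" for r s
  proof (rule DERIV_nonneg_imp_increasing_open[OF \<open>r \<le> s\<close>])
    show "\<And>y. r < y \<Longrightarrow> y < s \<Longrightarrow> \<exists>y'. (F has_real_derivative y') (at y) \<and> 0 \<le> y'"
      using deriv nonneg that by (meson le_less_trans less_le_trans)
    show "continuous_on {r..s} F" by (rule continuous_on_subset[OF assms(1)]) (use that in auto)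
  qed
  have "F y = 0" if "a \<le> y" "y \<le> b" for y
    using mono[of a y] mono[of y b] that assms(2,3) by auto
  then show ?thesis
    by (intro DERIV_local_const[OF deriv[OF x], of "min (x - a) (b - x)"]) (use x in \<open>auto simp: abs_if\<close>)
qed

lemma open_annulus: "open (annulus a b)"
  unfolding annulus_def by (intro open_Collect_conj open_Collect_less continuous_intros)

lemma annulus_subset_cl_annulus: "annulus a b \<subseteq> cl_annulus a b"
  unfolding annulus_def cl_annulus_def by auto

lemma polar_in_annulus: "0 < a \<Longrightarrow> r \<in> {a<..<b} \<Longrightarrow> polar r t \<in> annulus a b"
  by (auto simp: annulus_def norm_mult)

lemma polar_in_cl_annulus: "0 < a \<Longrightarrow> r \<in> {a..b} \<Longrightarrow> polar r t \<in> cl_annulus a b"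
  by (auto simp: cl_annulus_def norm_mult)

lemma C1_deriv_on_continuous: "C1_deriv_on S v v' \<Longrightarrow> continuous_on S v"
  unfolding C1_deriv_on_def by (meson continuous_on_eq_continuous_within has_derivative_continuous)

lemma C1_polar_flux_continuous:
  assumes C1: "C1_deriv_on (cl_annulus a b) w W" and a: "0 < a"
  shows "continuous_on ({a..b} \<times> X) (\<lambda>(r, t). r * Re (cnj (w (polar r t)) * W (polar r t) (cis t)))"
proof -
  have in_cl: "polar (fst p) (snd p) \<in> cl_annulus a b" if "p \<in> {a..b} \<times> X" for p
    using polar_in_cl_annulus[OF a] that by auto
  have cont_polar: "continuous_on ({a..b} \<times> X) (\<lambda>p. g (polar (fst p) (snd p)))"
    if "continuous_on (cl_annulus a b) g" for g
    by (rule continuous_on_compose2[OF that]) (auto intro!: continuous_intros in_cl)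
  have "continuous_on (cl_annulus a b) w"
    using C1 by (rule C1_deriv_on_continuous)
  moreover have "continuous_on (cl_annulus a b) (\<lambda>z. W z h)" for h
    using C1 unfolding C1_deriv_on_def by blast
  moreover have "continuous_on ({a..b} \<times> X) (\<lambda>p. W (polar (fst p) (snd p)) (cis (snd p)))"
  proof (rule continuous_on_eq)
    show "continuous_on ({a..b} \<times> X) (\<lambda>p. of_real (cos (snd p)) * W (polar (fst p) (snd p)) 1
                                          + of_real (sin (snd p)) * W (polar (fst p) (snd p)) \<i>)"
      using C1 unfolding C1_deriv_on_def by (intro continuous_intros cont_polar) auto
    fix p assume "p \<in> {a..b} \<times> X"
    with C1 have "(w has_derivative W (polar (fst p) (snd p))) (at (polar (fst p) (snd p)) within cl_annulus a b)"
      unfolding C1_deriv_on_def using in_cl by blast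
    from real_linear_decomp[OF has_derivative_bounded_linear[OF this], of "cis (snd p)"]
    show "of_real (cos (snd p)) * W (polar (fst p) (snd p)) 1 + of_real (sin (snd p)) * W (polar (fst p) (snd p)) \<i>
          = W (polar (fst p) (snd p)) (cis (snd p))" by simp
  qed
  ultimately show ?thesis unfolding split_beta
    by (intro continuous_intros cont_polar)
qed

text \<open>The energy argument for a harmonic function \<open>w\<close> on the annulus, carried out in polar
  coordinates \<open>z = polar r t\<close>.\<close>
locale harmonic_annulus =
  fixes Rid Rd :: real and w wx wy wxx wxy wyx wyy :: "complex \<Rightarrow> complex"
  assumes radii: "0 < Rid" "Rid < Rd"
    and harmonic: "harmonic_partials (annulus Rid Rd) w wx wy wxx wxy wyx wyy"
begin

lemma
  shows w_deriv: "z \<in> annulus Rid Rd \<Longrightarrow> (w has_derivative (\<lambda>h. of_real (Re h) * wx z + of_real (Im h) * wy z)) (at z)"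
    and wx_deriv: "z \<in> annulus Rid Rd \<Longrightarrow> (wx has_derivative (\<lambda>h. of_real (Re h) * wxx z + of_real (Im h) * wxy z)) (at z)"
    and wy_deriv: "z \<in> annulus Rid Rd \<Longrightarrow> (wy has_derivative (\<lambda>h. of_real (Re h) * wyx z + of_real (Im h) * wyy z)) (at z)"
    and laplace: "z \<in> annulus Rid Rd \<Longrightarrow> wxx z + wyy z = 0"
    and continuous_second_partials: "continuous_on (annulus Rid Rd) wxx" "continuous_on (annulus Rid Rd) wxy"
      "continuous_on (annulus Rid Rd) wyx" "continuous_on (annulus Rid Rd) wyy"
  using harmonic unfolding harmonic_partials_def by blast+

lemma continuous_partials: "continuous_on (annulus Rid Rd) wx" "continuous_on (annulus Rid Rd) wy"
  using wx_deriv wy_deriv by (meson continuous_at_imp_continuous_on has_derivative_continuous)+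

lemma polar_in: "r \<in> {Rid<..<Rd} \<Longrightarrow> polar r t \<in> annulus Rid Rd"
  using polar_in_annulus radii(1) .

definition radial :: "real \<Rightarrow> real \<Rightarrow> complex" where
  "radial r t = of_real (cos t) * wx (polar r t) + of_real (sin t) * wy (polar r t)"

definition radial2 :: "real \<Rightarrow> real \<Rightarrow> complex" where
  "radial2 r t = of_real (cos t) * (of_real (cos t) * wxx (polar r t) + of_real (sin t) * wxy (polar r t))
       + of_real (sin t) * (of_real (cos t) * wyx (polar r t) + of_real (sin t) * wyy (polar r t))"

definition angular :: "real \<Rightarrow> real \<Rightarrow> complex" where
  "angular r t = of_real r * (- of_real (sin t) * wx (polar r t) + of_real (cos t) * wy (polar r t))"

definition angular2 :: "real \<Rightarrow> real \<Rightarrow> complex" where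
  "angular2 r t = - of_real r * radial r t
       + of_real r * of_real r * (of_real (sin t) * (of_real (sin t) * wxx (polar r t) - of_real (cos t) * wxy (polar r t))
         + of_real (cos t) * (of_real (cos t) * wyy (polar r t) - of_real (sin t) * wyx (polar r t)))"

lemma w_radial_deriv:
  "r \<in> {Rid<..<Rd} \<Longrightarrow> ((\<lambda>r. w (polar r t)) has_vector_derivative radial r t) (at r)"
  unfolding radial_def by (intro radial_vector_derivative w_deriv polar_in)

lemma radial_radial_deriv:
  assumes "r \<in> {Rid<..<Rd}"
  shows "((\<lambda>r. radial r t) has_vector_derivative radial2 r t) (at r)"
  unfolding radial_def radial2_def using assms
  by (intro has_vector_derivative_add has_vector_derivative_mult_right
      radial_vector_derivative wx_deriv wy_deriv polar_in)

lemma w_angular_deriv: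
  "r \<in> {Rid<..<Rd} \<Longrightarrow> ((\<lambda>t. w (polar r t)) has_vector_derivative angular r t) (at t)"
  unfolding angular_def by (intro angular_vector_derivative w_deriv polar_in)

lemma angular_angular_deriv:
  assumes r: "r \<in> {Rid<..<Rd}"
  shows "((\<lambda>t. angular r t) has_vector_derivative angular2 r t) (at t)"
proof -
  have "((\<lambda>t. of_real r * (- of_real (sin t) * wx (polar r t) + of_real (cos t) * wy (polar r t)))
     has_vector_derivative
       of_real r * ((- of_real (sin t) * (of_real r * (- of_real (sin t) * wxx (polar r t) + of_real (cos t) * wxy (polar r t)))
          + - of_real (cos t) * wx (polar r t))
        + (of_real (cos t) * (of_real r * (- of_real (sin t) * wyx (polar r t) + of_real (cos t) * wyy (polar r t)))
          + - of_real (sin t) * wy (polar r t)))) (at t)"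
    using r by (intro has_vector_derivative_mult_right has_vector_derivative_add has_vector_derivative_mult
        angular_vector_derivative wx_deriv wy_deriv polar_in) (auto intro!: derivative_eq_intros)
  then show ?thesis unfolding angular_def
    by (rule has_vector_derivative_eq_rhs) (simp add: angular2_def radial_def algebra_simps)
qed

lemma polar_laplace:
  assumes "r \<in> {Rid<..<Rd}"
  shows "of_real r * radial r t + of_real r * of_real r * radial2 r t + angular2 r t = 0"
proof -
  have cs: "(of_real (cos t) :: complex)^2 + (of_real (sin t))^2 = 1"
    by (metis of_real_add of_real_1 of_real_power sin_cos_squared_add2)
  have "of_real r * radial r t + of_real r * of_real r * radial2 r t + angular2 r t
        = of_real r * of_real r * (wxx (polar r t) + wyy (polar r t)) * ((of_real (cos t))^2 + (of_real (sin t))^2)"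
    unfolding radial2_def angular2_def by (simp add: algebra_simps power2_eq_square)
  also have "\<dots> = 0" using laplace polar_in[OF assms] by simp
  finally show ?thesis .
qed


lemma continuous_w: "continuous_on (annulus Rid Rd) w"
  using w_deriv by (meson continuous_at_imp_continuous_on has_derivative_continuous)

lemma continuous_on_polar:
  "continuous_on (annulus Rid Rd) g \<Longrightarrow> continuous_on ({Rid<..<Rd} \<times> X) (\<lambda>p. g (polar (fst p) (snd p)))"
  by (rule continuous_on_compose2) (auto intro!: continuous_intros polar_in)

lemma continuous_on_circle:
  "continuous_on (annulus Rid Rd) g \<Longrightarrow> r \<in> {Rid<..<Rd} \<Longrightarrow> continuous_on X (\<lambda>t. g (polar r t))"
  by (rule continuous_on_compose2) (auto intro!: continuous_intros polar_in)

definition flux :: "real \<Rightarrow> real \<Rightarrow> real" where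
  "flux r t = r * Re (cnj (w (polar r t)) * radial r t)"

definition flux_deriv :: "real \<Rightarrow> real \<Rightarrow> real" where
  "flux_deriv r t = Re (cnj (w (polar r t)) * radial r t)
     + r * Re (cnj (w (polar r t)) * radial2 r t + cnj (radial r t) * radial r t)"

definition energy_density :: "real \<Rightarrow> real \<Rightarrow> real" where
  "energy_density r t = r * (cmod (radial r t))\<^sup>2 + (cmod (angular r t))\<^sup>2 / r"

definition circ_flux :: "real \<Rightarrow> real \<Rightarrow> real" where
  "circ_flux r t = Re (cnj (w (polar r t)) * angular r t)"

definition circ_flux_deriv :: "real \<Rightarrow> real \<Rightarrow> real" where
  "circ_flux_deriv r t = Re (cnj (w (polar r t)) * angular2 r t + cnj (angular r t) * angular r t)"

lemma flux_has_deriv: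
  assumes r: "r \<in> {Rid<..<Rd}"
  shows "((\<lambda>r. flux r t) has_field_derivative flux_deriv r t) (at r)"
proof -
  have "((\<lambda>r. cnj (w (polar r t)) * radial r t) has_vector_derivative
           cnj (w (polar r t)) * radial2 r t + cnj (radial r t) * radial r t) (at r)"
    by (intro has_vector_derivative_mult has_vector_derivative_cnj w_radial_deriv radial_radial_deriv r)
  from bounded_linear.has_vector_derivative[OF bounded_linear_Re this]
  have "((\<lambda>r. Re (cnj (w (polar r t)) * radial r t)) has_field_derivative
           Re (cnj (w (polar r t)) * radial2 r t + cnj (radial r t) * radial r t)) (at r)"
    by (simp add: has_real_derivative_iff_has_vector_derivative)
  from DERIV_mult[OF DERIV_ident this] show ?thesis
    unfolding flux_def flux_deriv_def by (rule DERIV_cong) (simp add: algebra_simps)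
qed

lemma circ_flux_has_deriv:
  assumes r: "r \<in> {Rid<..<Rd}"
  shows "((\<lambda>t. circ_flux r t) has_vector_derivative circ_flux_deriv r t) (at t)"
proof -
  have "((\<lambda>t. cnj (w (polar r t)) * angular r t) has_vector_derivative
           cnj (w (polar r t)) * angular2 r t + cnj (angular r t) * angular r t) (at t)"
    by (intro has_vector_derivative_mult has_vector_derivative_cnj w_angular_deriv angular_angular_deriv r)
  from bounded_linear.has_vector_derivative[OF bounded_linear_Re this] show ?thesis
    unfolding circ_flux_def circ_flux_deriv_def .
qed

text \<open>Pointwise Green identity: by the polar Laplace equation the radial derivative of the
  flux is the energy density up to an exact \<open>\<theta>\<close>-derivative.\<close>
lemma flux_deriv_eq:
  assumes r: "r \<in> {Rid<..<Rd}"
  shows "flux_deriv r t = energy_density r t - circ_flux_deriv r t / r"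
proof -
  have r0: "r > 0" using r radii by auto
  have angular2: "angular2 r t = - (of_real r * radial r t) - of_real r * of_real r * radial2 r t"
    using polar_laplace[OF r, of t] by (simp add: algebra_simps add_eq_0_iff)
  have "(cmod z)\<^sup>2 = Re z * Re z + Im z * Im z" for z :: complex
    by (simp add: cmod_power2 flip: power2_eq_square)
  then show ?thesis using r0
    unfolding flux_deriv_def energy_density_def circ_flux_deriv_def angular2
    by (simp add: field_simps)
qed

text \<open>Since \<open>w\<close> is \<open>2\<pi>\<close>-periodic in \<open>\<theta>\<close>, the angular flux contributes nothing to the
  total energy flux.\<close>
lemma circ_flux_deriv_integral:
  assumes r: "r \<in> {Rid<..<Rd}"
  shows "(circ_flux_deriv r has_integral 0) {-pi..pi}"
proof -
  have "(circ_flux_deriv r has_integral (circ_flux r pi - circ_flux r (-pi))) {-pi..pi}"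
    by (rule fundamental_theorem_of_calculus)
       (auto intro: has_vector_derivative_at_within circ_flux_has_deriv[OF r])
  moreover have "polar r (-pi) = polar r pi" by (simp add: complex_eq_iff)
  ultimately show ?thesis by (simp add: circ_flux_def angular_def)
qed

lemma continuous_energy_density: "r \<in> {Rid<..<Rd} \<Longrightarrow> continuous_on X (energy_density r)"
  unfolding energy_density_def radial_def angular_def
  using radii by (intro continuous_intros continuous_on_circle continuous_partials) auto

lemma continuous_flux: "r \<in> {Rid<..<Rd} \<Longrightarrow> continuous_on X (flux r)"
  unfolding flux_def radial_def
  by (intro continuous_intros continuous_on_circle continuous_partials continuous_w)

lemma continuous_flux_deriv: "continuous_on ({Rid<..<Rd} \<times> X) (\<lambda>(r, t). flux_deriv r t)"
  unfolding flux_deriv_def radial_def radial2_def split_beta'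
  by (intro continuous_intros continuous_on_polar continuous_w continuous_partials continuous_second_partials)

lemma flux_deriv_integral:
  assumes r: "r \<in> {Rid<..<Rd}"
  shows "(flux_deriv r has_integral integral {-pi..pi} (energy_density r)) {-pi..pi}"
proof -
  have "((\<lambda>t. energy_density r t - circ_flux_deriv r t / r) has_integral integral {-pi..pi} (energy_density r) - 0 / r) {-pi..pi}"
    by (intro has_integral_diff has_integral_divide circ_flux_deriv_integral[OF r]
        integrable_integral integrable_continuous_real continuous_energy_density[OF r])
  moreover have "flux_deriv r = (\<lambda>t. energy_density r t - circ_flux_deriv r t / r)"
    using flux_deriv_eq[OF r] by auto
  ultimately show ?thesis by simp
qed

lemma energy_identity:
  assumes r: "r \<in> {Rid<..<Rd}"
  shows "((\<lambda>r. integral {-pi..pi} (flux r)) has_field_derivative integral {-pi..pi} (energy_density r)) (at r)"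
proof -
  have "((\<lambda>r. integral (cbox (-pi) pi) (flux r)) has_field_derivative integral (cbox (-pi) pi) (flux_deriv r))
          (at r within {Rid<..<Rd})"
  proof (rule leibniz_rule_field_derivative)
    show "((\<lambda>x. flux x t) has_field_derivative flux_deriv x t) (at x within {Rid<..<Rd})"
      if "x \<in> {Rid<..<Rd}" for x t
      using flux_has_deriv[OF that] by (rule has_field_derivative_at_within)
    show "flux x integrable_on cbox (- pi) pi" if "x \<in> {Rid<..<Rd}" for x
      by (rule integrable_continuous[OF continuous_flux[OF that]])
  qed (use continuous_flux_deriv r in auto)
  then show ?thesis
    using integral_unique[OF flux_deriv_integral[OF r]] at_within_open[OF r open_greaterThanLessThan]
    by simp
qed

lemma energy_density_nonneg: "r \<in> {Rid<..<Rd} \<Longrightarrow> 0 \<le> energy_density r t"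
  using radii unfolding energy_density_def by auto

lemma energy_nonneg: "r \<in> {Rid<..<Rd} \<Longrightarrow> 0 \<le> integral {-pi..pi} (energy_density r)"
  by (rule integral_nonneg[OF integrable_continuous_real[OF continuous_energy_density]]) (auto intro: energy_density_nonneg)

lemma energy_zero_imp_radial_zero:
  assumes r: "r \<in> {Rid<..<Rd}" and t: "t \<in> {-pi..pi}"
    and zero: "integral {-pi..pi} (energy_density r) = 0"
  shows "radial r t = 0"
proof -
  have "energy_density r t = 0"
  proof (rule has_integral_0_cbox_imp_0[of "-pi" pi "energy_density r"])
    show "continuous_on (cbox (- pi) pi) (energy_density r)" by (rule continuous_energy_density[OF r])
    show "0 \<le> energy_density r x" for x by (rule energy_density_nonneg[OF r])
    have "energy_density r integrable_on {-pi..pi}"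
      by (rule integrable_continuous_real[OF continuous_energy_density[OF r]])
    then show "(energy_density r has_integral 0) (cbox (- pi) pi)"
      using integrable_integral zero by fastforce
    show "box (- pi) pi \<noteq> {}" using pi_gt_zero by (simp add: box_real) (use pi_gt_zero in linarith)
  qed (use t in simp)
  then have "r * (cmod (radial r t))\<^sup>2 = 0"
    using r radii unfolding energy_density_def
    by (smt (verit) divide_nonneg_pos mult_nonneg_nonneg zero_le_power2 greaterThanLessThan_iff)
  then show ?thesis using r radii by auto
qed

text \<open>If the radial derivative vanishes throughout the open annulus, then \<open>w\<close> is constant
  along every ray, so zero Dirichlet data on the inner circle force \<open>w = 0\<close>.\<close>
lemma zero_radial_imp_zero:
  assumes cont: "continuous_on (cl_annulus Rid Rd) w"
    and radial_zero: "\<And>r t. r \<in> {Rid<..<Rd} \<Longrightarrow> t \<in> {-pi..pi} \<Longrightarrow> radial r t = 0"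
    and dirichlet: "\<And>t. w (polar Rid t) = 0"
    and z: "z \<in> cl_annulus Rid Rd"
  shows "w z = 0"
proof -
  define R t where "R = cmod z" and "t = Arg z"
  have z_polar: "z = polar R t" using rcis_cmod_Arg[of z] by (simp add: R_def t_def rcis_def)
  have R: "R \<in> {Rid..Rd}" using z by (auto simp: R_def cl_annulus_def)
  have t: "t \<in> {-pi..pi}" using Arg_bounded[of z] by (auto simp: t_def)
  have "w (polar R t) = w (polar Rid t)"
  proof (rule has_derivative_zero_unique_strong_interval[of "{Rid, R}" Rid R "\<lambda>r. w (polar r t)"])
    show "continuous_on {Rid..R} (\<lambda>r. w (polar r t))"
      by (rule continuous_on_compose2[OF cont])
         (use R radii in \<open>auto intro!: continuous_intros polar_in_cl_annulus\<close>)
    show "((\<lambda>r. w (polar r t)) has_derivative (\<lambda>h. 0)) (at x within {Rid..R})"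
      if "x \<in> {Rid..R} - {Rid, R}" for x
    proof -
      have x: "x \<in> {Rid<..<Rd}" using that R by auto
      have "((\<lambda>r. w (polar r t)) has_vector_derivative 0) (at x)"
        using w_radial_deriv[OF x, of t] radial_zero[OF x t] by simp
      then show ?thesis by (auto simp: has_vector_derivative_def intro: has_derivative_at_withinI)
    qed
  qed (use R in auto)
  then show ?thesis using z_polar dirichlet by simp
qed

lemma C1_deriv_interior:
  assumes "C1_deriv_on (cl_annulus Rid Rd) w W" and z: "z \<in> annulus Rid Rd"
  shows "W z = (\<lambda>h. of_real (Re h) * wx z + of_real (Im h) * wy z)"
proof -
  have "at z within cl_annulus Rid Rd = at z"
    by (rule at_within_open_subset[OF z open_annulus annulus_subset_cl_annulus])
  moreover have "(w has_derivative W z) (at z within cl_annulus Rid Rd)"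
    using assms annulus_subset_cl_annulus unfolding C1_deriv_on_def by blast
  ultimately have "(w has_derivative W z) (at z)" by simp
  then show ?thesis by (rule has_derivative_unique[OF _ w_deriv[OF z]])
qed

text \<open>The total flux \<open>F\<close> vanishes at both radii and is nondecreasing by the energy identity,
  so the energy and hence \<open>w\<^sub>r\<close> vanish, and \<open>w\<close> is zero along every ray.\<close>
lemma mixed_uniqueness:
  assumes C1: "C1_deriv_on (cl_annulus Rid Rd) w W"
    and neumann: "\<And>t. W (polar Rd t) (cis t) = 0"
    and dirichlet: "\<And>t. w (polar Rid t) = 0"
    and z: "z \<in> cl_annulus Rid Rd"
  shows "w z = 0"
proof -
  define F where "F r = integral {-pi..pi} (\<lambda>t. r * Re (cnj (w (polar r t)) * W (polar r t) (cis t)))" for r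
  have F_interior: "F r = integral {-pi..pi} (flux r)" if "r \<in> {Rid<..<Rd}" for r
  proof -
    have W_radial: "W (polar r t) (cis t) = radial r t" for t
      using C1_deriv_interior[OF C1 polar_in[OF that]] by (simp add: radial_def)
    show ?thesis unfolding F_def flux_def W_radial ..
  qed
  have "continuous_on ({Rid..Rd} \<times> {-pi..pi}) (\<lambda>(r, t). r * Re (cnj (w (polar r t)) * W (polar r t) (cis t)))"
    using C1 radii(1) by (rule C1_polar_flux_continuous)
  then have F_cont: "continuous_on {Rid..Rd} F"
    unfolding F_def cbox_interval[symmetric] by (rule integral_continuous_on_param)
  have F_ends: "F Rid = 0" "F Rd = 0" by (simp_all add: F_def dirichlet neumann)
  have F_deriv: "(F has_field_derivative integral {-pi..pi} (energy_density r)) (at r)"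
    if "Rid < r" "r < Rd" for r
  proof (rule has_field_derivative_transform_within_open[where S = "{Rid<..<Rd}"])
    show "((\<lambda>r. integral {-pi..pi} (flux r)) has_field_derivative integral {-pi..pi} (energy_density r)) (at r)"
      using that by (intro energy_identity) simp
  qed (use that F_interior in auto)
  have zero_energy: "integral {-pi..pi} (energy_density r) = 0" if "r \<in> {Rid<..<Rd}" for r
  proof (rule nonneg_derivative_vanishing_ends[OF F_cont F_ends F_deriv])
    show "0 \<le> integral {-pi..pi} (energy_density x)" if "Rid < x" "x < Rd" for x
      using that by (intro energy_nonneg) simp
  qed (use that in auto)
  show ?thesis
    by (rule zero_radial_imp_zero[OF C1_deriv_on_continuous[OF C1] _ dirichlet z])
       (use energy_zero_imp_radial_zero zero_energy in auto)
qed

end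

theorem mixed_problem_uniqueness:
  assumes "0 < Rid" "Rid < Rd" "harmonic_on (annulus Rid Rd) w" "C1_deriv_on (cl_annulus Rid Rd) w W"
    and "\<And>t. W (polar Rd t) (cis t) = 0" "\<And>t. w (polar Rid t) = 0"
    and "z \<in> cl_annulus Rid Rd"
  shows "w z = 0"
proof -
  obtain wx wy wxx wxy wyx wyy where "harmonic_partials (annulus Rid Rd) w wx wy wxx wxy wyx wyy"
    using assms(3) unfolding harmonic_on_def by blast
  with assms(1,2) interpret harmonic_annulus Rid Rd w wx wy wxx wxy wyx wyy
    by unfold_locales
  show ?thesis using mixed_uniqueness assms(4-) by blast
qed

lemma ln_cmod_has_derivative:
  assumes "z \<noteq> 0"
  shows "((\<lambda>z. of_real (ln (cmod z)) :: complex) has_derivative (\<lambda>h. h / (2 * z) + cnj (h / (2 * z)))) (at z)"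
proof -
  have "((\<lambda>z. ln (cmod z)) has_derivative (\<lambda>h. inner h (sgn z) * inverse (cmod z))) (at z)"
    using assms by (auto intro!: derivative_eq_intros has_derivative_norm)
  moreover have "inner h (sgn z) * inverse (cmod z) = Re (h / z)" for h
  proof -
    have "inverse (cmod z) * inverse (cmod z) = inverse (Re z * Re z + Im z * Im z)"
      by (metis cmod_power2 inverse_mult_distrib power2_eq_square)
    then show ?thesis
      by (simp add: inner_complex_def sgn_div_norm Re_divide power2_eq_square divide_inverse algebra_simps)
  qed
  ultimately have "((\<lambda>z. ln (cmod z)) has_derivative (\<lambda>h. Re (h / z))) (at z)" by simp
  from bounded_linear.has_derivative[OF bounded_linear_of_real this]
  have "((\<lambda>z. of_real (ln (cmod z)) :: complex) has_derivative (\<lambda>h. of_real (Re (h / z)))) (at z)" .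
  moreover have "of_real (Re (h / z)) = h / (2 * z) + cnj (h / (2 * z))" for h
  proof -
    have "x / 2 + cnj (x / 2) = of_real (Re x)" for x :: complex
      by (simp add: complex_eq_iff)
    from this[of "h / z"] show ?thesis by (simp add: mult.commute)
  qed
  ultimately show ?thesis by simp
qed

text \<open>The separated harmonic functions on the punctured plane:
  \<open>X z\<^sup>j + Y conj (z\<^sup>-\<^sup>j) + Z ln \<bar>z\<bar>\<close>, which in polar coordinates read
  \<open>(X r\<^sup>j + Y r\<^sup>-\<^sup>j) e\<^sup>i\<^sup>j\<^sup>\<theta> + Z ln r\<close>.  Their differential is \<open>h \<mapsto> p h + conj (q h)\<close> with
  \<open>p = \<partial>\<^sub>z\<close> given by \<open>mode_dz\<close> and \<open>conj q = \<partial>\<^sub>z\<^sub>\<bar>\<close> given by \<open>mode_dzbar\<close>.\<close>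
definition mode :: "real \<Rightarrow> real \<Rightarrow> real \<Rightarrow> int \<Rightarrow> complex \<Rightarrow> complex" where
  "mode X Y Z j z = of_real X * z powi j + of_real Y * cnj (z powi (-j)) + of_real Z * of_real (ln (cmod z))"

definition mode_dz :: "real \<Rightarrow> real \<Rightarrow> int \<Rightarrow> complex \<Rightarrow> complex" where
  "mode_dz X Z j z = of_real X * (of_int j * z powi (j - 1)) + of_real Z / (2 * z)"

definition mode_dzbar :: "real \<Rightarrow> real \<Rightarrow> int \<Rightarrow> complex \<Rightarrow> complex" where
  "mode_dzbar Y Z j z = of_real Y * (of_int (-j) * z powi (-j - 1)) + of_real Z / (2 * z)"

lemma mode_has_derivative:
  assumes z: "z \<noteq> 0"
  shows "(mode X Y Z j has_derivative (\<lambda>h. mode_dz X Z j z * h + cnj (mode_dzbar Y Z j z * h))) (at z)"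
proof -
  have "(mode X Y Z j has_derivative (\<lambda>h. of_real X * (h * (of_int j * z powi (j - 1)))
       + of_real Y * cnj (h * (of_int (-j) * z powi (-j - 1))) + of_real Z * (h / (2 * z) + cnj (h / (2 * z))))) (at z)"
    unfolding mode_def
    by (intro has_derivative_add has_derivative_mult_right has_derivative_cnj
        has_derivative_power_int' ln_cmod_has_derivative z)
  then show ?thesis
    by (rule has_derivative_eq_rhs) (simp add: fun_eq_iff mode_dz_def mode_dzbar_def algebra_simps)
qed

lemma polar_powi: "R > 0 \<Longrightarrow> (polar R t) powi n = of_real (R powi n) * cis (of_int n * t)"
  by (simp add: power_int_mult_distrib cis_power_int)

lemma mode_polar:
  assumes R: "R > 0"
  shows "mode X Y Z j (polar R t)
           = of_real (X * R powi j + Y * R powi (-j)) * cis (of_int j * t) + of_real (Z * ln R)"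
proof -
  have "cnj ((polar R t) powi (-j)) = of_real (R powi (-j)) * cis (of_int j * t)"
    unfolding polar_powi[OF R] by (simp add: cis_cnj del: of_real_power_int complex_cnj_power_int)
  moreover have "cmod (polar R t) = R" using R by (simp add: norm_mult)
  ultimately show ?thesis
    unfolding mode_def polar_powi[OF R] by (simp add: algebra_simps del: of_real_power_int)
qed

lemma mode_radial_polar:
  assumes R: "R > 0"
  shows "mode_dz X Z j (polar R t) * cis t + cnj (mode_dzbar Y Z j (polar R t) * cis t)
    = of_real (of_int j * X * R powi (j - 1) - of_int j * Y * R powi (- j - 1)) * cis (of_int j * t) + of_real (Z / R)"
proof -
  have c1: "cis (of_int (j - 1) * t) * cis t = cis (of_int j * t)"
    by (simp add: cis_mult algebra_simps)
  have c2: "cnj (cis (of_int (- j - 1) * t)) * cnj (cis t) = cis (of_int j * t)"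
    by (simp add: cis_mult cis_cnj algebra_simps)
  have c3: "of_real Z / (2 * polar R t) * cis t = (of_real (Z / (2 * R)) :: complex)"
    using R by (simp add: field_simps)
  have "mode_dz X Z j (polar R t) * cis t
          = of_real (of_int j * X * R powi (j - 1)) * cis (of_int j * t) + of_real (Z / (2 * R))"
    unfolding mode_dz_def polar_powi[OF R] using c1 c3 by (simp add: algebra_simps)
  moreover have "mode_dzbar Y Z j (polar R t) * cis t
          = of_real (- of_int j * Y * R powi (- j - 1)) * (cis (of_int (- j - 1) * t) * cis t) + of_real (Z / (2 * R))"
    unfolding mode_dzbar_def polar_powi[OF R] using c3 by (simp add: algebra_simps)
  then have "cnj (mode_dzbar Y Z j (polar R t) * cis t)
          = of_real (- of_int j * Y * R powi (- j - 1)) * cis (of_int j * t) + of_real (Z / (2 * R))"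
    by (simp only: complex_cnj_add complex_cnj_mult complex_cnj_complex_of_real c2)
  ultimately show ?thesis by (simp add: algebra_simps)
qed

definition mode_sum :: "(int \<Rightarrow> complex) \<Rightarrow> int set \<Rightarrow> (int \<Rightarrow> real) \<Rightarrow> (int \<Rightarrow> real) \<Rightarrow> (int \<Rightarrow> real)
    \<Rightarrow> complex \<Rightarrow> complex" where
  "mode_sum a S X Y Z z = (\<Sum>j\<in>S. a j * mode (X j) (Y j) (Z j) j z)"

definition mode_sum_dz :: "(int \<Rightarrow> complex) \<Rightarrow> int set \<Rightarrow> (int \<Rightarrow> real) \<Rightarrow> (int \<Rightarrow> real) \<Rightarrow> complex \<Rightarrow> complex" where
  "mode_sum_dz a S X Z z = (\<Sum>j\<in>S. a j * mode_dz (X j) (Z j) j z)"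

definition mode_sum_dzbar :: "(int \<Rightarrow> complex) \<Rightarrow> int set \<Rightarrow> (int \<Rightarrow> real) \<Rightarrow> (int \<Rightarrow> real) \<Rightarrow> complex \<Rightarrow> complex" where
  "mode_sum_dzbar a S Y Z z = (\<Sum>j\<in>S. cnj (a j) * mode_dzbar (Y j) (Z j) j z)"

definition mode_sum_diff :: "(int \<Rightarrow> complex) \<Rightarrow> int set \<Rightarrow> (int \<Rightarrow> real) \<Rightarrow> (int \<Rightarrow> real) \<Rightarrow> (int \<Rightarrow> real)
    \<Rightarrow> complex \<Rightarrow> complex \<Rightarrow> complex" where
  "mode_sum_diff a S X Y Z z h = mode_sum_dz a S X Z z * h + cnj (mode_sum_dzbar a S Y Z z * h)"

text \<open>The Wirtinger derivatives of a mode sum are holomorphic off the origin, so mode sums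
  are harmonic there.\<close>
lemma mode_sum_dz_holomorphic: "mode_sum_dz a S X Z holomorphic_on - {0}"
  unfolding mode_sum_dz_def mode_dz_def by (auto intro!: holomorphic_intros)

lemma mode_sum_dzbar_holomorphic: "mode_sum_dzbar a S Y Z holomorphic_on - {0}"
  unfolding mode_sum_dzbar_def mode_dzbar_def by (auto intro!: holomorphic_intros)

lemma mode_sum_has_derivative:
  assumes "z \<noteq> 0"
  shows "(mode_sum a S X Y Z has_derivative mode_sum_diff a S X Y Z z) (at z)"
proof -
  have "(mode_sum a S X Y Z has_derivative
      (\<lambda>h. \<Sum>j\<in>S. a j * (mode_dz (X j) (Z j) j z * h + cnj (mode_dzbar (Y j) (Z j) j z * h)))) (at z)"
    unfolding mode_sum_def by (intro has_derivative_sum has_derivative_mult_right mode_has_derivative assms)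
  then show ?thesis
    by (rule has_derivative_eq_rhs)
       (simp add: fun_eq_iff mode_sum_diff_def mode_sum_dz_def mode_sum_dzbar_def sum_distrib_left
          sum_distrib_right sum.distrib algebra_simps)
qed

lemma mode_sum_harmonic: "harmonic_on (- {0}) (mode_sum a S X Y Z)"
proof (rule harmonic_on_Wirtinger[OF _ mode_sum_dz_holomorphic mode_sum_dzbar_holomorphic])
  show "(mode_sum a S X Y Z has_derivative
           (\<lambda>h. mode_sum_dz a S X Z z * h + cnj (mode_sum_dzbar a S Y Z z * h))) (at z)" if "z \<in> - {0}" for z
    using mode_sum_has_derivative[of z] that unfolding mode_sum_diff_def by simp
qed auto

lemma mode_sum_polar:
  "R > 0 \<Longrightarrow> mode_sum a S X Y Z (polar R t) = (\<Sum>j\<in>S. a j *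
     (of_real (X j * R powi j + Y j * R powi (-j)) * cis (of_int j * t) + of_real (Z j * ln R)))"
  unfolding mode_sum_def by (simp add: mode_polar)

lemma mode_sum_radial_polar:
  assumes "R > 0"
  shows "mode_sum_diff a S X Y Z (polar R t) (cis t)
    = (\<Sum>j\<in>S. a j * (of_real (of_int j * X j * R powi (j - 1) - of_int j * Y j * R powi (- j - 1))
          * cis (of_int j * t) + of_real (Z j / R)))"
proof -
  have "mode_sum_diff a S X Y Z z h
          = (\<Sum>j\<in>S. a j * (mode_dz (X j) (Z j) j z * h + cnj (mode_dzbar (Y j) (Z j) j z * h)))" for z h
    by (simp add: mode_sum_diff_def mode_sum_dz_def mode_sum_dzbar_def sum_distrib_left sum_distrib_right
        sum.distrib algebra_simps)
  then show ?thesis using mode_radial_polar[OF assms] by simp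
qed

lemma powi_shift:
  fixes x :: real
  assumes "x > 0"
  shows "x powi (2*n) = (x powi n)^2" "x powi (-n) = 1 / x powi n" "x powi (n - 1) = x powi n / x"
    "x powi (-n - 1) = 1 / (x powi n * x)" "x powi (n + 1) = x powi n * x"
    "x powi (2*n + 1) = (x powi n)^2 * x" "x powi (2*n - 1) = (x powi n)^2 / x"
proof -
  have x: "x \<noteq> 0" using assms by simp
  show sq: "x powi (2*n) = (x powi n)^2"
    by (simp only: mult_2 power_int_add[OF disjI1[OF x]] power2_eq_square)
  show "x powi (-n) = 1 / x powi n" by (simp add: power_int_minus divide_inverse)
  show "x powi (n - 1) = x powi n / x" by (simp add: power_int_diff[OF disjI1[OF x]])
  show "x powi (-n - 1) = 1 / (x powi n * x)"
    by (simp add: power_int_diff[OF disjI1[OF x]] power_int_minus divide_inverse)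
  show "x powi (n + 1) = x powi n * x" by (simp add: power_int_add[OF disjI1[OF x]])
  show "x powi (2*n + 1) = (x powi n)^2 * x" by (simp only: power_int_add[OF disjI1[OF x]] sq power_int_1_right)
  show "x powi (2*n - 1) = (x powi n)^2 / x" by (simp only: power_int_diff[OF disjI1[OF x]] sq power_int_1_right)
qed

text \<open>Coefficients of the mode \<open>\<phi>\<^sub>j = phi_X z\<^sup>j + phi_Y conj (z\<^sup>-\<^sup>j)\<close>: it equals \<open>e\<^sup>i\<^sup>j\<^sup>\<theta>\<close> on the
  inner circle, has zero radial derivative on the outer circle, and its trace on the outer
  circle is \<open>beta e\<^sup>i\<^sup>j\<^sup>\<theta>\<close>.\<close>
definition phi_X :: "real \<Rightarrow> real \<Rightarrow> int \<Rightarrow> real" where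
  "phi_X Rid Rd j = Rid powi j / (Rid powi (2*j) + Rd powi (2*j))"

definition phi_Y :: "real \<Rightarrow> real \<Rightarrow> int \<Rightarrow> real" where
  "phi_Y Rid Rd j = phi_X Rid Rd j * Rd powi (2*j)"

definition beta :: "real \<Rightarrow> real \<Rightarrow> int \<Rightarrow> real" where
  "beta Rid Rd j = 2 * Rid powi j * Rd powi j / (Rid powi (2*j) + Rd powi (2*j))"

text \<open>Coefficients of the mode \<open>\<psi>\<^sub>j\<close> (including the logarithm for \<open>j = 0\<close>): it vanishes on the
  inner circle and has radial derivative \<open>-2 beta e\<^sup>i\<^sup>j\<^sup>\<theta>\<close> on the outer circle; its radial
  derivative on the inner circle turns out to be \<open>-C\<^sub>j e\<^sup>i\<^sup>j\<^sup>\<theta>\<close>.\<close>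
definition psi_X :: "real \<Rightarrow> real \<Rightarrow> int \<Rightarrow> real" where
  "psi_X Rid Rd j = (if j = 0 then Rd * ln Rid
     else - 2 * beta Rid Rd j * Rd powi (j+1) / (of_int j * (Rd powi (2*j) + Rid powi (2*j))))"

definition psi_Y :: "real \<Rightarrow> real \<Rightarrow> int \<Rightarrow> real" where
  "psi_Y Rid Rd j = (if j = 0 then Rd * ln Rid else - psi_X Rid Rd j * Rid powi (2*j))"

definition psi_Z :: "real \<Rightarrow> int \<Rightarrow> real" where
  "psi_Z Rd j = (if j = 0 then -2 * Rd else 0)"

context
  fixes Rid Rd :: real
  assumes pos: "0 < Rid" "0 < Rd"
begin

lemmas shift = powi_shift[OF pos(1)] powi_shift[OF pos(2)]

text \<open>Abbreviate \<open>p = R\<^sub>i\<^sub>d\<^sup>j\<close>, \<open>q = R\<^sub>d\<^sup>j\<close> and \<open>D = p\<^sup>2 + q\<^sup>2\<close>; all identities below are rational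
  identities in these quantities.\<close>
lemma powers:
  obtains p q D where "Rid powi j = p" "Rd powi j = q" "p > 0" "q > 0"
    and "p\<^sup>2 + q\<^sup>2 = D" "q\<^sup>2 + p\<^sup>2 = D" "D = p * p + q * q" "D > 0"
  using pos by (simp add: add.commute power2_eq_square add_pos_pos)

text \<open>The constant \<open>C\<^sub>j\<close> in terms of \<open>p\<close> and \<open>q\<close>; it depends on \<open>j\<close> only through \<open>\<bar>j\<bar>\<close>.\<close>
lemma Cj_powers:
  "Cj Rid Rd j = 8 * Rd * (Rid powi j)^2 * (Rd powi j)^2 / (Rid * ((Rid powi j)^2 + (Rd powi j)^2)^2)"
proof (cases "j \<ge> 0")
  case True
  then have "\<bar>j\<bar> = j" by simp
  then show ?thesis unfolding Cj_def shift(1,6,7) shift(8,13,14) using pos by (simp add: field_simps)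
next
  case False
  then have abs: "\<bar>j\<bar> = - j" by simp
  have neg: "Rid powi (- j) = 1 / Rid powi j" "Rd powi (- j) = 1 / Rd powi j"
    by (simp_all add: shift)
  show ?thesis unfolding Cj_def abs shift(1,6,7) shift(8,13,14) neg using pos by (simp add: field_simps)
qed

lemma phi_inner: "phi_X Rid Rd j * Rid powi j + phi_Y Rid Rd j * Rid powi (-j) = 1"
proof -
  obtain p q D where pq: "Rid powi j = p" "Rd powi j = q" "p > 0" "q > 0"
    and D: "p\<^sup>2 + q\<^sup>2 = D" "q\<^sup>2 + p\<^sup>2 = D" "D = p * p + q * q" "D > 0" by (rule powers)
  show ?thesis unfolding phi_Y_def phi_X_def shift pq(1,2) D(1,2) using pq D(4) pos
    by (simp add: field_simps) (simp_all add: D(3) algebra_simps power2_eq_square)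
qed

lemma phi_outer: "phi_X Rid Rd j * Rd powi j + phi_Y Rid Rd j * Rd powi (-j) = beta Rid Rd j"
proof -
  obtain p q D where pq: "Rid powi j = p" "Rd powi j = q" "p > 0" "q > 0"
    and D: "p\<^sup>2 + q\<^sup>2 = D" "q\<^sup>2 + p\<^sup>2 = D" "D = p * p + q * q" "D > 0" by (rule powers)
  show ?thesis unfolding phi_Y_def phi_X_def beta_def shift pq(1,2) D(1,2) using pq D(4) pos
    by (simp add: field_simps) (simp_all add: D(3) algebra_simps power2_eq_square)
qed

lemma phi_outer_radial:
  "of_int j * phi_X Rid Rd j * Rd powi (j - 1) - of_int j * phi_Y Rid Rd j * Rd powi (- j - 1) = 0"
proof -
  obtain p q D where pq: "Rid powi j = p" "Rd powi j = q" "p > 0" "q > 0"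
    and D: "p\<^sup>2 + q\<^sup>2 = D" "q\<^sup>2 + p\<^sup>2 = D" "D = p * p + q * q" "D > 0" by (rule powers)
  show ?thesis unfolding phi_Y_def phi_X_def shift pq(1,2) D(1,2) using pq D(4) pos
    by (simp add: field_simps) (simp_all add: D(3) algebra_simps power2_eq_square)
qed

lemma psi_inner:
  assumes j: "j \<noteq> 0"
  shows "psi_X Rid Rd j * Rid powi j + psi_Y Rid Rd j * Rid powi (-j) = 0"
proof -
  obtain p q D where pq: "Rid powi j = p" "Rd powi j = q" "p > 0" "q > 0"
    and D: "p\<^sup>2 + q\<^sup>2 = D" "q\<^sup>2 + p\<^sup>2 = D" "D = p * p + q * q" "D > 0" by (rule powers)
  show ?thesis unfolding psi_Y_def shift pq(1,2) D(1,2) using pq D(4) pos j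
    by (simp add: field_simps) (simp_all add: D(3) algebra_simps power2_eq_square)
qed

lemma psi_outer_radial:
  assumes j: "j \<noteq> 0"
  shows "of_int j * psi_X Rid Rd j * Rd powi (j - 1) - of_int j * psi_Y Rid Rd j * Rd powi (- j - 1) = - 2 * beta Rid Rd j"
proof -
  obtain p q D where pq: "Rid powi j = p" "Rd powi j = q" "p > 0" "q > 0"
    and D: "p\<^sup>2 + q\<^sup>2 = D" "q\<^sup>2 + p\<^sup>2 = D" "D = p * p + q * q" "D > 0" by (rule powers)
  show ?thesis unfolding psi_Y_def psi_X_def beta_def shift pq(1,2) D(1,2) using pq D(4) pos j
    by (simp add: field_simps) (simp_all add: D(3) algebra_simps power2_eq_square)
qed

lemma psi_inner_radial:
  assumes j: "j \<noteq> 0"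
  shows "of_int j * psi_X Rid Rd j * Rid powi (j - 1) - of_int j * psi_Y Rid Rd j * Rid powi (- j - 1) = - Cj Rid Rd j"
proof -
  obtain p q D where pq: "Rid powi j = p" "Rd powi j = q" "p > 0" "q > 0"
    and D: "p\<^sup>2 + q\<^sup>2 = D" "q\<^sup>2 + p\<^sup>2 = D" "D = p * p + q * q" "D > 0" by (rule powers)
  show ?thesis unfolding psi_Y_def psi_X_def beta_def Cj_powers shift pq(1,2) D(1,2) using pq D(4) pos j
    by (simp add: field_simps) (simp_all add: D(3) algebra_simps power2_eq_square)
qed

lemma phi_sum_inner:
  "mode_sum a S (phi_X Rid Rd) (phi_Y Rid Rd) (\<lambda>_. 0) (polar Rid t) = (\<Sum>j\<in>S. a j * cis (of_int j * t))"
  using phi_inner by (simp add: mode_sum_polar[OF pos(1)])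

lemma phi_sum_outer:
  "mode_sum a S (phi_X Rid Rd) (phi_Y Rid Rd) (\<lambda>_. 0) (polar Rd t)
     = (\<Sum>j\<in>S. a j * (of_real (beta Rid Rd j) * cis (of_int j * t)))"
  using phi_outer by (simp add: mode_sum_polar[OF pos(2)])

lemma phi_sum_outer_radial:
  "mode_sum_diff a S (phi_X Rid Rd) (phi_Y Rid Rd) (\<lambda>_. 0) (polar Rd t) (cis t) = 0"
  unfolding mode_sum_radial_polar[OF pos(2)] phi_outer_radial by simp

lemma psi_sum_inner: "mode_sum a S (psi_X Rid Rd) (psi_Y Rid Rd) (psi_Z Rd) (polar Rid t) = 0"
  unfolding mode_sum_polar[OF pos(1)]
proof (rule sum.neutral, rule ballI)
  fix j
  show "a j * (of_real (psi_X Rid Rd j * Rid powi j + psi_Y Rid Rd j * Rid powi (-j)) * cis (of_int j * t)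
          + of_real (psi_Z Rd j * ln Rid)) = 0"
  proof (cases "j = 0")
    case True then show ?thesis by (simp add: psi_X_def psi_Y_def psi_Z_def)
  next
    case False then show ?thesis using psi_inner[OF False] by (simp add: psi_Z_def)
  qed
qed

lemma psi_sum_outer_radial:
  "mode_sum_diff a S (psi_X Rid Rd) (psi_Y Rid Rd) (psi_Z Rd) (polar Rd t) (cis t)
     = (\<Sum>j\<in>S. a j * (of_real (- 2 * beta Rid Rd j) * cis (of_int j * t)))"
  unfolding mode_sum_radial_polar[OF pos(2)]
proof (rule sum.cong[OF refl])
  fix j
  show "a j * (of_real (of_int j * psi_X Rid Rd j * Rd powi (j - 1) - of_int j * psi_Y Rid Rd j * Rd powi (- j - 1))
          * cis (of_int j * t) + of_real (psi_Z Rd j / Rd))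
        = a j * (of_real (- 2 * beta Rid Rd j) * cis (of_int j * t))"
  proof (cases "j = 0")
    case True then show ?thesis using pos by (simp add: psi_Z_def beta_def)
  next
    case False then show ?thesis using psi_outer_radial[OF False] by (simp add: psi_Z_def)
  qed
qed

lemma psi_sum_inner_radial:
  "mode_sum_diff a S (psi_X Rid Rd) (psi_Y Rid Rd) (psi_Z Rd) (polar Rid t) (cis t)
     = (\<Sum>j\<in>S. a j * (of_real (- Cj Rid Rd j) * cis (of_int j * t)))"
  unfolding mode_sum_radial_polar[OF pos(1)]
proof (rule sum.cong[OF refl])
  fix j
  show "a j * (of_real (of_int j * psi_X Rid Rd j * Rid powi (j - 1) - of_int j * psi_Y Rid Rd j * Rid powi (- j - 1))
          * cis (of_int j * t) + of_real (psi_Z Rd j / Rid))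
        = a j * (of_real (- Cj Rid Rd j) * cis (of_int j * t))"
  proof (cases "j = 0")
    case True then show ?thesis using pos by (simp add: psi_Z_def Cj_def power_int_minus field_simps)
  next
    case False then show ?thesis using psi_inner_radial[OF False] by (simp add: psi_Z_def)
  qed
qed

end

lemma C1_deriv_on_diff:
  assumes "C1_deriv_on S u U" "C1_deriv_on S v V"
  shows "C1_deriv_on S (\<lambda>z. u z - v z) (\<lambda>z h. U z h - V z h)"
  using assms unfolding C1_deriv_on_def by (auto intro: has_derivative_diff continuous_on_diff)

lemma mixed_bvp_solutionD:
  assumes "mixed_bvp_solution Rid Rd g w v v'"
  shows "harmonic_on (annulus Rid Rd) v" "C1_deriv_on (cl_annulus Rid Rd) v v'"
    "\<And>t. v' (polar Rd t) (cis t) = g t" "\<And>t. v (polar Rid t) = w t"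
  using assms harmonic_C2_imp_harmonic_on
  unfolding mixed_bvp_solution_def normal_deriv_d_def by blast+

lemma mode_sum_C1: "0 < Rid \<Longrightarrow> C1_deriv_on (cl_annulus Rid Rd) (mode_sum a S X Y Z) (mode_sum_diff a S X Y Z)"
  unfolding C1_deriv_on_def
proof (intro conjI ballI allI)
  assume Rid: "0 < Rid"
  then have sub: "cl_annulus Rid Rd \<subseteq> - {0}" by (auto simp: cl_annulus_def)
  show "(mode_sum a S X Y Z has_derivative mode_sum_diff a S X Y Z z) (at z within cl_annulus Rid Rd)"
    if "z \<in> cl_annulus Rid Rd" for z
    using sub that by (intro has_derivative_at_withinI[OF mode_sum_has_derivative]) auto
  show "continuous_on (cl_annulus Rid Rd) (\<lambda>z. mode_sum_diff a S X Y Z z h)" for h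
  proof -
    have "continuous_on (cl_annulus Rid Rd) (mode_sum_dz a S X Z)"
      "continuous_on (cl_annulus Rid Rd) (mode_sum_dzbar a S Y Z)"
      by (rule continuous_on_subset[OF holomorphic_on_imp_continuous_on sub],
          rule mode_sum_dz_holomorphic mode_sum_dzbar_holomorphic)+
    then show ?thesis unfolding mode_sum_diff_def by (intro continuous_intros)
  qed
qed

text \<open>By uniqueness, a solution of the mixed problem whose boundary data are those of a
  mode sum coincides with that mode sum.\<close>
lemma mixed_solution_eq_mode_sum:
  assumes radii: "0 < Rid" "Rid < Rd"
    and v: "harmonic_on (annulus Rid Rd) v" "C1_deriv_on (cl_annulus Rid Rd) v V"
    and neumann: "\<And>t. V (polar Rd t) (cis t) = mode_sum_diff a S X Y Z (polar Rd t) (cis t)"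
    and dirichlet: "\<And>t. v (polar Rid t) = mode_sum a S X Y Z (polar Rid t)"
    and z: "z \<in> cl_annulus Rid Rd"
  shows "v z = mode_sum a S X Y Z z"
proof -
  have "annulus Rid Rd \<subseteq> - {0}" using radii by (auto simp: annulus_def)
  then have "harmonic_on (annulus Rid Rd) (\<lambda>z. v z - mode_sum a S X Y Z z)"
    by (intro harmonic_on_diff v harmonic_on_subset[OF mode_sum_harmonic])
  moreover have "C1_deriv_on (cl_annulus Rid Rd) (\<lambda>z. v z - mode_sum a S X Y Z z)
                   (\<lambda>z h. V z h - mode_sum_diff a S X Y Z z h)"
    by (intro C1_deriv_on_diff v mode_sum_C1 radii)
  ultimately have "v z - mode_sum a S X Y Z z = 0"
    by (rule mixed_problem_uniqueness[OF radii]) (simp_all add: neumann dirichlet z)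
  then show ?thesis by simp
qed

text \<open>Two functions agreeing on the closed annulus have the same radial derivative on the
  inner circle, the one-sided derivative of the ray \<open>r \<mapsto> polar r t\<close> at \<open>r = R\<^sub>i\<^sub>d\<close>.\<close>
lemma inner_radial_derivative_unique:
  fixes f g Df Dg :: "complex \<Rightarrow> complex"
  assumes radii: "0 < Rid" "Rid < Rd"
    and eq: "\<And>z. z \<in> cl_annulus Rid Rd \<Longrightarrow> f z = g z"
    and df: "(f has_derivative Df) (at (polar Rid t) within cl_annulus Rid Rd)"
    and dg: "(g has_derivative Dg) (at (polar Rid t))"
  shows "Df (cis t) = Dg (cis t)"
proof -
  define \<gamma> where "\<gamma> s = polar s t" for s
  have d\<gamma>: "(\<gamma> has_derivative (\<lambda>h. of_real h * cis t)) (at Rid within {Rid..Rd})"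
    unfolding \<gamma>_def by (auto intro!: derivative_eq_intros)
  have ray: "\<gamma> ` {Rid..Rd} \<subseteq> cl_annulus Rid Rd"
    using radii by (auto simp: \<gamma>_def intro: polar_in_cl_annulus)
  have lin: "D (of_real h * cis t) = h *\<^sub>R D (cis t)" if "bounded_linear D" for D :: "complex \<Rightarrow> complex" and h
    using that by (simp add: bounded_linear.linear linear_scale flip: scaleR_conv_of_real)
  have "((f \<circ> \<gamma>) has_derivative (Df \<circ> (\<lambda>h. of_real h * cis t))) (at Rid within {Rid..Rd})"
    by (rule diff_chain_within[OF d\<gamma>]) (rule has_derivative_subset[OF _ ray], simp add: \<gamma>_def df)
  then have "((f \<circ> \<gamma>) has_vector_derivative Df (cis t)) (at Rid within {Rid..Rd})"
    unfolding has_vector_derivative_def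
    by (rule has_derivative_eq_rhs) (auto simp: fun_eq_iff lin[OF has_derivative_bounded_linear[OF df]])
  then have "((g \<circ> \<gamma>) has_vector_derivative Df (cis t)) (at Rid within {Rid..Rd})"
    by (rule has_vector_derivative_transform_within[OF _ zero_less_one]) (use radii ray eq in force)+
  moreover have "((g \<circ> \<gamma>) has_derivative (Dg \<circ> (\<lambda>h. of_real h * cis t))) (at Rid within {Rid..Rd})"
    by (rule diff_chain_within[OF d\<gamma>]) (rule has_derivative_at_withinI, simp add: \<gamma>_def dg)
  then have "((g \<circ> \<gamma>) has_vector_derivative Dg (cis t)) (at Rid within {Rid..Rd})"
    unfolding has_vector_derivative_def
    by (rule has_derivative_eq_rhs) (auto simp: fun_eq_iff lin[OF has_derivative_bounded_linear[OF dg]])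
  ultimately show ?thesis
    using radii by (intro vector_derivative_unique_within_closed_interval[of Rid Rd Rid]) auto
qed

text \<open>The error \<open>v(\<omega>\<^sup>*) - v(\<omega>\<^sub>k)\<close> is the mode sum \<open>\<Sum> a\<^sub>j \<phi>\<^sub>j\<close>; hence the residual of the primary
  state on \<open>\<Gamma>\<^sub>d\<close> is \<open>-\<Sum> a\<^sub>j beta\<^sub>j e\<^sup>i\<^sup>j\<^sup>\<theta>\<close>.\<close>
lemma primary_residual:
  assumes radii: "0 < Rid" "Rid < Rd"
    and exact: "mixed_bvp_solution Rid Rd qbar \<omega>s vs vs'"
    and exact_data: "\<forall>\<theta>. vs (of_real Rd * cis \<theta>) = ubar \<theta>"
    and primary: "mixed_bvp_solution Rid Rd qbar \<omega>k vk vk'"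
    and error: "\<forall>\<theta>. \<omega>s \<theta> - \<omega>k \<theta> = (\<Sum>j\<in>S. a j * cis (of_int j * \<theta>))"
  shows "vk (polar Rd t) - ubar t = - (\<Sum>j\<in>S. a j * (of_real (beta Rid Rd j) * cis (of_int j * t)))"
proof -
  have pos: "0 < Rid" "0 < Rd" using radii by auto
  note s = mixed_bvp_solutionD[OF exact] and k = mixed_bvp_solutionD[OF primary]
  have "vs z - vk z = mode_sum a S (phi_X Rid Rd) (phi_Y Rid Rd) (\<lambda>_. 0) z"
    if "z \<in> cl_annulus Rid Rd" for z
  proof (rule mixed_solution_eq_mode_sum[OF radii harmonic_on_diff C1_deriv_on_diff])
    show "vs' (polar Rd t) (cis t) - vk' (polar Rd t) (cis t)
            = mode_sum_diff a S (phi_X Rid Rd) (phi_Y Rid Rd) (\<lambda>_. 0) (polar Rd t) (cis t)" for t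
      by (simp add: s(3) k(3) phi_sum_outer_radial[OF pos])
    show "vs (polar Rid t) - vk (polar Rid t) = mode_sum a S (phi_X Rid Rd) (phi_Y Rid Rd) (\<lambda>_. 0) (polar Rid t)" for t
      by (simp add: s(4) k(4) error phi_sum_inner[OF pos])
  qed (use s k that in auto)
  from this[of "polar Rd t"] have "vs (polar Rd t) - vk (polar Rd t)
      = (\<Sum>j\<in>S. a j * (of_real (beta Rid Rd j) * cis (of_int j * t)))"
    using polar_in_cl_annulus[OF pos(1), of Rd] radii by (simp add: phi_sum_outer[OF pos])
  then show ?thesis using exact_data by (simp add: algebra_simps)
qed

text \<open>With that Neumann residual the adjoint state is \<open>\<Sum> a\<^sub>j \<psi>\<^sub>j\<close>, and its normal derivative on
  \<open>\<Gamma>\<^sub>i\<^sub>d\<close> yields the gradient \<open>J'(\<omega>\<^sub>k) = -\<Sum> C\<^sub>j a\<^sub>j e\<^sup>i\<^sup>j\<^sup>\<theta>\<close>.\<close>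
lemma adjoint_gradient:
  assumes radii: "0 < Rid" "Rid < Rd"
    and adjoint: "mixed_bvp_solution Rid Rd (\<lambda>\<theta>. 2 * (vk (of_real Rd * cis \<theta>) - ubar \<theta>)) (\<lambda>_. 0) vh vh'"
    and residual: "\<And>t. vk (polar Rd t) - ubar t = - (\<Sum>j\<in>S. a j * (of_real (beta Rid Rd j) * cis (of_int j * t)))"
  shows "Jprime Rid vh' t = - (\<Sum>j\<in>S. of_real (Cj Rid Rd j) * a j * cis (of_int j * t))"
proof -
  have pos: "0 < Rid" "0 < Rd" using radii by auto
  note h = mixed_bvp_solutionD[OF adjoint]
  define \<Psi> where "\<Psi> = mode_sum a S (psi_X Rid Rd) (psi_Y Rid Rd) (psi_Z Rd)"
  have vh_eq: "vh z = \<Psi> z" if "z \<in> cl_annulus Rid Rd" for z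
    unfolding \<Psi>_def
  proof (rule mixed_solution_eq_mode_sum[OF radii h(1,2) _ _ that])
    show "vh' (polar Rd t) (cis t)
            = mode_sum_diff a S (psi_X Rid Rd) (psi_Y Rid Rd) (psi_Z Rd) (polar Rd t) (cis t)" for t
      unfolding h(3) residual psi_sum_outer_radial[OF pos]
      by (simp add: sum_distrib_left sum_negf[symmetric] algebra_simps)
    show "vh (polar Rid t) = mode_sum a S (psi_X Rid Rd) (psi_Y Rid Rd) (psi_Z Rd) (polar Rid t)" for t
      by (simp add: h(4) psi_sum_inner[OF pos])
  qed
  have inner: "polar Rid t \<in> cl_annulus Rid Rd" using polar_in_cl_annulus[OF pos(1)] radii by simp
  have "vh' (polar Rid t) (cis t)
          = mode_sum_diff a S (psi_X Rid Rd) (psi_Y Rid Rd) (psi_Z Rd) (polar Rid t) (cis t)"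
  proof (rule inner_radial_derivative_unique[OF radii vh_eq, where Df = "vh' (polar Rid t)"
        and Dg = "mode_sum_diff a S (psi_X Rid Rd) (psi_Y Rid Rd) (psi_Z Rd) (polar Rid t)"])
    show "(vh has_derivative vh' (polar Rid t)) (at (polar Rid t) within cl_annulus Rid Rd)"
      using h(2) inner unfolding C1_deriv_on_def by blast
    show "(\<Psi> has_derivative mode_sum_diff a S (psi_X Rid Rd) (psi_Y Rid Rd) (psi_Z Rd) (polar Rid t)) (at (polar Rid t))"
      unfolding \<Psi>_def by (rule mode_sum_has_derivative) (use pos in simp)
  qed
  then show ?thesis
    unfolding Jprime_def normal_deriv_id_def psi_sum_inner_radial[OF pos]
    by (simp add: sum_negf[symmetric] algebra_simps)
qed

theorem mainTheorem4:
  fixes Rid Rd \<rho> :: real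
    and ubar qbar \<omega>s \<omega>k \<omega>k1 :: "real \<Rightarrow> complex"
    and vs vk vh :: "complex \<Rightarrow> complex"
    and vs' vk' vh' :: "complex \<Rightarrow> complex \<Rightarrow> complex"
    and M N :: nat and a :: "int \<Rightarrow> complex"
  assumes "0 < Rid" and "Rid < Rd"
    and exact: "mixed_bvp_solution Rid Rd qbar \<omega>s vs vs'"
    and exact_data: "\<forall>\<theta>. vs (of_real Rd * cis \<theta>) = ubar \<theta>"
    and primary: "mixed_bvp_solution Rid Rd qbar \<omega>k vk vk'"
    and adjoint: "mixed_bvp_solution Rid Rd (\<lambda>\<theta>. 2 * (vk (of_real Rd * cis \<theta>) - ubar \<theta>)) (\<lambda>_. 0) vh vh'"
    and "\<rho> > 0"
    and step: "\<forall>\<theta>. \<omega>k1 \<theta> = \<omega>k \<theta> - of_real \<rho> * Jprime Rid vh' \<theta>"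
    and "M \<le> N"
    and error: "\<forall>\<theta>. \<omega>s \<theta> - \<omega>k \<theta> = (\<Sum>j\<in>freqs M N. a j * cis (of_int j * \<theta>))"
  shows "(\<forall>\<theta>. Jprime Rid vh' \<theta> = - (\<Sum>j\<in>freqs M N. of_real (Cj Rid Rd j) * a j * cis (of_int j * \<theta>)))
       \<and> (\<forall>\<theta>. \<omega>s \<theta> - \<omega>k1 \<theta> = (\<Sum>j\<in>freqs M N. (1 - of_real (Cj Rid Rd j * \<rho>)) * a j * cis (of_int j * \<theta>)))"
proof -
  have gradient: "Jprime Rid vh' \<theta> = - (\<Sum>j\<in>freqs M N. of_real (Cj Rid Rd j) * a j * cis (of_int j * \<theta>))" for \<theta>
    using adjoint_gradient[OF \<open>0 < Rid\<close> \<open>Rid < Rd\<close> adjoint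
        primary_residual[OF \<open>0 < Rid\<close> \<open>Rid < Rd\<close> exact exact_data primary error]] .
  have "\<omega>s \<theta> - \<omega>k1 \<theta> = (\<omega>s \<theta> - \<omega>k \<theta>) + of_real \<rho> * Jprime Rid vh' \<theta>" for \<theta>
    using step by simp
  then have "\<omega>s \<theta> - \<omega>k1 \<theta> = (\<Sum>j\<in>freqs M N. (1 - of_real (Cj Rid Rd j * \<rho>)) * a j * cis (of_int j * \<theta>))" for \<theta>
    by (simp add: error gradient sum_distrib_left sum_subtractf[symmetric] algebra_simps)
  with gradient show ?thesis by blast
qed

end
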